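(* Let $P_0\subset\mathbb{H}^4$ be the Coxeter polytope with facets $\mathbf{1},\dots,\mathbf{7}$ whose Coxeter diagram is the cycle $6-5-4-3-2-1-7-6$ with labels $m_{65}=4$, $m_{54}=4$, $m_{43}=6$, $m_{32}=4$, $m_{21}=\infty$, $m_{17}=4$, $m_{76}=6$ (all other pairs meeting orthogonally). Let $P_0,P_1,\dots$ be a sequence of polytopes with $P_{n+1}=P_n\cup r_{F_n}(P_n)$, where $F_n$ is a non-compact admissible facet of $P_n$ and $r_{F_n}$ is the reflection of $\mathbb{H}^4$ in the hyperplane containing $F_n$. If a facet of $P_n$ of type $i$ and a facet of $P_n$ of type $j$ intersect, with $i\neq j$, then their dihedral angle equals the dihedral angle between the facets $\mathbf{i}$ and $\mathbf{j}$ of $P_0$; in particular the facets $\mathbf{i}$ and $\mathbf{j}$ of $P_0$ intersect.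
   Context: A facet $F$ of a polytope $P$ is admissible if whenever it intersects another facet $K$ of $P$, the dihedral angle between $F$ and $K$ equals $\pi/(2k)$ for some $k\in\mathbb{N}$. By construction each $P_n$ is tessellated by copies of $P_0$ (images of $P_0$ under compositions of the reflections used), and this induces a tessellation of each facet of $P_n$ by copies of facets of $P_0$; a facet of $P_n$ is of type $i$ if it is tessellated by copies of the facet $\mathbf{i}$ of $P_0$. *)

theory Defs
  imports "HOL-Analysis.Analysis"
begin

text \<open>Minkowski bilinear form of signature (4,1) on real^5; coordinate 0 is the time coordinate.\<close>
definition mink :: "real^5 \<Rightarrow> real^5 \<Rightarrow> real" where
  "mink x y = (\<Sum>i\<in>UNIV. x$i * y$i) - 2 * (x$0 * y$0)"

definition Hyp :: "(real^5) set" where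
  "Hyp = {x. mink x x = -1 \<and> x$0 > 0}"

definition hplane :: "real^5 \<Rightarrow> (real^5) set" where
  "hplane e = {x \<in> Hyp. mink x e = 0}"

definition halfspace :: "real^5 \<Rightarrow> (real^5) set" where
  "halfspace e = {x \<in> Hyp. mink x e \<le> 0}"

text \<open>Reflection in the hyperplane orthogonal to e (mink e e = 1).\<close>
definition hrefl :: "real^5 \<Rightarrow> real^5 \<Rightarrow> real^5" where
  "hrefl e x = x - (2 * mink x e) *\<^sub>R e"

text \<open>F is a facet of P \<subseteq> H^4: F is the intersection of P with a supporting hyperplane,
  and F is 3-dimensional (its linear span in R^5 is 4-dimensional).\<close>
definition supports :: "(real^5) set \<Rightarrow> (real^5) set \<Rightarrow> real^5 \<Rightarrow> bool" where
  "supports P F e \<longleftrightarrow> mink e e = 1 \<and> P \<subseteq> halfspace e \<and> F = P \<inter> hplane e"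

definition is_facet :: "(real^5) set \<Rightarrow> (real^5) set \<Rightarrow> bool" where
  "is_facet P F \<longleftrightarrow> P \<subseteq> Hyp \<and> (\<exists>e. supports P F e) \<and> dim F = 4"

definition normal :: "(real^5) set \<Rightarrow> (real^5) set \<Rightarrow> real^5" where
  "normal P F = (THE e. supports P F e)"

definition dihedral :: "(real^5) set \<Rightarrow> (real^5) set \<Rightarrow> (real^5) set \<Rightarrow> real" where
  "dihedral P F K = arccos (- mink (normal P F) (normal P K))"

definition admissible :: "(real^5) set \<Rightarrow> (real^5) set \<Rightarrow> bool" where
  "admissible P F \<longleftrightarrow> is_facet P F \<and>
     (\<forall>K. is_facet P K \<and> K \<noteq> F \<and> F \<inter> K \<noteq> {} \<longrightarrow>
        (\<exists>k::nat. k \<ge> 1 \<and> dihedral P F K = pi / (2 * real k)))"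

text \<open>Gram entries mink e_i e_j = - cos(pi/m_ij),
  with -1 for label \<infinity>.\<close>
definition cox_gram :: "nat \<Rightarrow> nat \<Rightarrow> real" where
  "cox_gram i j =
     (if i = j then 1
      else if {i,j} = {6,5} \<or> {i,j} = {5,4} \<or> {i,j} = {3,2} \<or> {i,j} = {1,7} then - cos (pi / 4)
      else if {i,j} = {4,3} \<or> {i,j} = {7,6} then - cos (pi / 6)
      else if {i,j} = {2,1} then -1
      else 0)"

definition polytope_of :: "(nat \<Rightarrow> real^5) \<Rightarrow> (real^5) set" where
  "polytope_of e = Hyp \<inter> {x. \<forall>i\<in>{1..7}. mink x (e i) \<le> 0}"

definition cfacet :: "(nat \<Rightarrow> real^5) \<Rightarrow> nat \<Rightarrow> (real^5) set" where
  "cfacet e i = polytope_of e \<inter> hplane (e i)"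

text \<open>The isometries g such that the copies g(P_0) tessellate P_n.\<close>
primrec tiles :: "(nat \<Rightarrow> (real^5) set) \<Rightarrow> (nat \<Rightarrow> (real^5) set) \<Rightarrow> nat
    \<Rightarrow> (real^5 \<Rightarrow> real^5) set" where
  "tiles P F 0 = {id}"
| "tiles P F (Suc n) = tiles P F n \<union> ((\<lambda>g. hrefl (normal (P n) (F n)) \<circ> g) ` tiles P F n)"

text \<open>A facet G of P_n is of type i if it is tessellated by copies of facet i of P_0,
  i.e. it is the union of the copies g(facet i), g a tile of P_n, that it contains.\<close>
definition of_type :: "(nat \<Rightarrow> real^5) \<Rightarrow> (nat \<Rightarrow> (real^5) set) \<Rightarrow> (nat \<Rightarrow> (real^5) set)
    \<Rightarrow> nat \<Rightarrow> (real^5) set \<Rightarrow> nat \<Rightarrow> bool" where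
  "of_type e P F n G i \<longleftrightarrow>
     G = \<Union> {g ` cfacet e i | g. g \<in> tiles P F n \<and> g ` cfacet e i \<subseteq> G}"

end

theory Submission
  imports Defs
begin

text \<open>
  Call a wall of \<open>P n\<close> a copy \<open>g(i)\<close> of a facet of \<open>P 0\<close>, \<open>g\<close> a tile of \<open>P n\<close>,
  whose hyperplane supports \<open>P n\<close>; its outward normal is \<open>g(e i)\<close>. By induction on \<open>n\<close>,
  two walls of types \<open>i \<noteq> j\<close> through a common point have Minkowski product
  \<open>mink (e i) (e j)\<close>, and the facets \<open>i\<close> and \<open>j\<close> of \<open>P 0\<close> meet. Walls on the same side of
  the mirror of \<open>F n\<close> are covered by the induction hypothesis, possibly after reflecting.
  Walls on opposite sides meet on the mirror, where admissibility of \<open>F n\<close> makes each of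
  them meet the mirror at angle \<open>\<pi>/2\<close> or at most \<open>\<pi>/4\<close>. Two angles of at most \<open>\<pi>/4\<close>
  together with the obtuse angle between the walls would force the reflected normal of one
  wall to be the opposite of the other normal, squeezing \<open>P n\<close> into a hyperplane; so one
  wall is orthogonal to the mirror and the reflection does not change the product. Finally,
  the normal of a facet of type \<open>i\<close> is the normal of any of its tiles.
\<close>

section \<open>Minkowski space\<close>

definition time_flip :: "real^5 \<Rightarrow> real^5" where
  "time_flip v = (\<chi> k. if k = 0 then - v$k else v$k)"

lemma mink_eq_inner_time_flip: "mink x y = x \<bullet> time_flip y"
proof -
  have "x \<bullet> time_flip y = (\<Sum>i\<in>UNIV. x$i * y$i - (if i = 0 then 2 * (x$i * y$i) else 0))"
    unfolding inner_vec_def time_flip_def by (rule sum.cong) auto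
  also have "\<dots> = (\<Sum>i\<in>UNIV. x$i * y$i) - 2 * (x$0 * y$0)"
    by (simp add: sum_subtractf)
  finally show ?thesis by (simp add: mink_def)
qed

lemma time_flip_time_flip [simp]: "time_flip (time_flip v) = v"
  by (simp add: time_flip_def vec_eq_iff)

lemma time_flip_scaleR: "time_flip (c *\<^sub>R v) = c *\<^sub>R time_flip v"
  by (simp add: time_flip_def vec_eq_iff)

lemma time_flip_eq_0_iff [simp]: "time_flip v = 0 \<longleftrightarrow> v = 0"
  by (metis time_flip_time_flip time_flip_scaleR scale_zero_left)

lemma mink_sym: "mink x y = mink y x"
  by (simp add: mink_def mult.commute)

lemma mink_add_left: "mink (x + y) z = mink x z + mink y z"
  by (simp add: mink_eq_inner_time_flip inner_add_left)

lemma mink_add_right: "mink z (x + y) = mink z x + mink z y"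
  by (metis mink_sym mink_add_left)

lemma mink_diff_left: "mink (x - y) z = mink x z - mink y z"
  by (simp add: mink_eq_inner_time_flip inner_diff_left)

lemma mink_diff_right: "mink z (x - y) = mink z x - mink z y"
  by (metis mink_sym mink_diff_left)

lemma mink_scaleR_left: "mink (c *\<^sub>R x) z = c * mink x z"
  by (simp add: mink_eq_inner_time_flip)

lemma mink_scaleR_right: "mink z (c *\<^sub>R x) = c * mink z x"
  by (metis mink_sym mink_scaleR_left)

lemma mink_minus_left: "mink (- x) z = - mink x z"
  by (simp add: mink_eq_inner_time_flip)

lemma mink_minus_right: "mink z (- x) = - mink z x"
  by (metis mink_sym mink_minus_left)

lemma mink_zero [simp]: "mink 0 z = 0" "mink z 0 = 0"
  by (simp_all add: mink_def)

lemmas mink_simps = mink_add_left mink_add_right mink_diff_left mink_diff_right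
  mink_scaleR_left mink_scaleR_right mink_minus_left mink_minus_right

lemma mink_nondegenerate: "(\<And>y. mink y v = 0) \<Longrightarrow> v = 0"
  by (metis inner_eq_zero_iff mink_eq_inner_time_flip time_flip_eq_0_iff)

lemma mink_perp_eq_hyperplane: "{y. mink y a = 0} = {y. time_flip a \<bullet> y = 0}"
  by (auto simp: mink_eq_inner_time_flip inner_commute)

lemma dim_mink_perp: "a \<noteq> 0 \<Longrightarrow> dim {y. mink y a = 0} = 4"
  unfolding mink_perp_eq_hyperplane by (simp add: dim_hyperplane)

lemma subspace_mink_perp: "subspace {y. mink y a = 0}"
  unfolding mink_perp_eq_hyperplane by (rule subspace_hyperplane)

lemma mink_perp_parallel:
  assumes dim: "dim S = 4" and "u \<noteq> 0"
    and Su: "S \<subseteq> {y. mink y u = 0}" and Sw: "S \<subseteq> {y. mink y w = 0}"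
  shows "\<exists>c. w = c *\<^sub>R u"
proof -
  let ?u = "time_flip u" and ?w = "time_flip w"
  have "?u \<noteq> 0" using \<open>u \<noteq> 0\<close> by simp
  have "span S = {y. mink y u = 0}"
    using Su dim \<open>u \<noteq> 0\<close>
    by (intro subspace_dim_equal) (auto simp: dim_mink_perp subspace_mink_perp span_minimal)
  moreover have "span S \<subseteq> {y. mink y w = 0}"
    using Sw by (simp add: span_minimal subspace_mink_perp)
  ultimately have perp: "?u \<bullet> y = 0 \<Longrightarrow> ?w \<bullet> y = 0" for y
    unfolding mink_perp_eq_hyperplane by blast
  define c where "c = (?w \<bullet> ?u) / (?u \<bullet> ?u)"
  define y where "y = ?w - c *\<^sub>R ?u"
  have "?u \<bullet> y = 0"
    using \<open>?u \<noteq> 0\<close> by (simp add: y_def c_def inner_diff_right inner_commute)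
  moreover have "?w \<bullet> y = 0" using perp[OF \<open>?u \<bullet> y = 0\<close>] .
  ultimately have "y \<bullet> y = 0"
    by (simp add: y_def inner_diff_left)
  then have "?w = c *\<^sub>R ?u" by (simp add: y_def)
  then have "w = c *\<^sub>R u"
    by (metis time_flip_time_flip time_flip_scaleR)
  then show ?thesis ..
qed

definition spatial :: "real^5 \<Rightarrow> real^5" where
  "spatial v = (\<chi> k. if k = 0 then 0 else v$k)"

lemma mink_eq_spatial: "mink x y = spatial x \<bullet> spatial y - x$0 * y$0"
proof -
  have "spatial x \<bullet> spatial y = (\<Sum>i\<in>UNIV. x$i * y$i - (if i = 0 then x$i * y$i else 0))"
    unfolding inner_vec_def spatial_def by (rule sum.cong) auto
  also have "\<dots> = (\<Sum>i\<in>UNIV. x$i * y$i) - x$0 * y$0"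
    by (simp add: sum_subtractf)
  finally show ?thesis by (simp add: mink_def)
qed

lemma mink_perp_timelike:
  assumes x: "mink x x = -1" and v: "mink v x = 0"
  shows mink_perp_timelike_nonneg: "0 \<le> mink v v"
    and mink_perp_timelike_eq_0: "mink v v = 0 \<Longrightarrow> v = 0"
proof -
  let ?s = "spatial v \<bullet> spatial v"
  have xx: "spatial x \<bullet> spatial x = x$0 * x$0 - 1" using x by (simp add: mink_eq_spatial)
  have vx: "spatial v \<bullet> spatial x = v$0 * x$0" using v by (simp add: mink_eq_spatial)
  have x0: "1 \<le> x$0 * x$0" using xx by (metis inner_ge_zero le_diff_eq add_0)
  have "(v$0 * x$0)\<^sup>2 \<le> ?s * (x$0 * x$0 - 1)"
    using Cauchy_Schwarz_ineq[of "spatial v" "spatial x"] by (simp add: vx xx)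
  then have key: "?s \<le> (?s - (v$0)\<^sup>2) * (x$0 * x$0)"
    by (simp add: power2_eq_square algebra_simps)
  have vv: "mink v v = ?s - (v$0)\<^sup>2" by (simp add: mink_eq_spatial power2_eq_square)
  show nonneg: "0 \<le> mink v v"
  proof (rule ccontr)
    assume "\<not> 0 \<le> mink v v"
    then have "(?s - (v$0)\<^sup>2) * (x$0 * x$0) < 0"
      using x0 vv by (simp add: mult_neg_pos)
    then show False using key by (smt (verit) inner_ge_zero)
  qed
  assume "mink v v = 0"
  then have "?s = 0" and "(v$0)\<^sup>2 = 0"
    using key vv by (smt (verit) inner_ge_zero mult_eq_0_iff)+
  then have "spatial v = 0" and "v$0 = 0" by auto
  then show "v = 0"
    by (simp add: vec_eq_iff spatial_def) metis
qed

lemma mink_unit_perp_timelike_bound: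
  assumes "mink x x = -1" "mink a x = 0" "mink b x = 0" "mink a a = 1" "mink b b = 1"
  shows "\<bar>mink a b\<bar> \<le> 1"
proof -
  have "0 \<le> mink (a + b) (a + b)"
    by (rule mink_perp_timelike_nonneg[OF assms(1)]) (use assms(2,3) in \<open>simp add: mink_simps\<close>)
  moreover have "0 \<le> mink (a - b) (a - b)"
    by (rule mink_perp_timelike_nonneg[OF assms(1)]) (use assms(2,3) in \<open>simp add: mink_simps\<close>)
  moreover have "mink (a + b) (a + b) = 2 + 2 * mink a b" "mink (a - b) (a - b) = 2 - 2 * mink a b"
    using assms(4,5) mink_sym[of b a] by (simp_all add: mink_simps)
  ultimately show ?thesis by linarith
qed

section \<open>Reflections and isometries\<close>

lemma hrefl_linear: "linear (hrefl b)"
  unfolding hrefl_def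
  by (rule linearI) (simp_all add: mink_simps scaleR_add_left algebra_simps)

lemma hrefl_mink: "mink b b = 1 \<Longrightarrow> mink (hrefl b x) (hrefl b y) = mink x y"
  unfolding hrefl_def mink_simps using mink_sym[of b x] mink_sym[of b y]
  by (simp add: algebra_simps)

lemma hrefl_hrefl [simp]: "mink b b = 1 \<Longrightarrow> hrefl b (hrefl b x) = x"
  unfolding hrefl_def mink_simps by (simp add: algebra_simps)

lemma hrefl_self: "mink b b = 1 \<Longrightarrow> hrefl b b = - b"
  by (simp add: hrefl_def scaleR_2)

lemma mink_hrefl_self: "mink b b = 1 \<Longrightarrow> mink (hrefl b z) b = - mink z b"
  by (simp add: hrefl_def mink_simps)

lemma hrefl_fixes: "mink z b = 0 \<Longrightarrow> hrefl b z = z"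
  by (simp add: hrefl_def)

lemma mink_hrefl_right:
  "mink b b = 1 \<Longrightarrow> mink a (hrefl b c) = mink a c - 2 * mink a b * mink c b"
  using mink_sym[of a b] by (simp add: hrefl_def mink_simps)

definition mink_isometry :: "(real^5 \<Rightarrow> real^5) \<Rightarrow> bool" where
  "mink_isometry g \<longleftrightarrow> linear g \<and> (\<forall>x y. mink (g x) (g y) = mink x y)"

lemma mink_isometry_mink: "mink_isometry g \<Longrightarrow> mink (g x) (g y) = mink x y"
  by (simp add: mink_isometry_def)

lemma mink_isometry_id: "mink_isometry id"
  by (simp add: mink_isometry_def linear_id)

lemma mink_isometry_comp: "mink_isometry f \<Longrightarrow> mink_isometry g \<Longrightarrow> mink_isometry (f \<circ> g)"
  by (simp add: mink_isometry_def linear_compose)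

lemma mink_isometry_hrefl: "mink b b = 1 \<Longrightarrow> mink_isometry (hrefl b)"
  by (simp add: mink_isometry_def hrefl_linear hrefl_mink)

lemma mink_isometry_inj:
  assumes "mink_isometry g"
  shows "inj g"
proof (rule injI)
  fix x y
  assume "g x = g y"
  then have "mink z (x - y) = 0" for z
    using assms by (metis mink_isometry_def mink_diff_right right_minus_eq)
  then show "x = y"
    using mink_nondegenerate mink_sym by (metis right_minus_eq)
qed

lemma mink_isometry_surj: "mink_isometry g \<Longrightarrow> surj g"
  by (rule linear_injective_imp_surjective) (auto simp: mink_isometry_def mink_isometry_inj)

lemma dim_mink_isometry_image: "mink_isometry g \<Longrightarrow> dim (g ` S) = dim S"
  by (metis dim_image_eq inj_on_subset mink_isometry_def mink_isometry_inj top_greatest)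

text \<open>The vector \<open>a + c + \<surd>2 b\<close> is orthogonal to the timelike \<open>x\<close> but has non-positive
  Minkowski square, so it vanishes.\<close>
lemma hrefl_eq_neg_if_sharp_angles:
  assumes x: "mink x x = -1" and perp: "mink a x = 0" "mink b x = 0" "mink c x = 0"
    and unit: "mink a a = 1" "mink b b = 1" "mink c c = 1"
    and ac: "mink a c \<le> 0"
    and ab: "mink a b \<le> - sqrt 2 / 2" and cb: "mink c b \<le> - sqrt 2 / 2"
  shows "hrefl b a = - c"
proof -
  define s where "s = sqrt 2"
  have s: "s * s = 2" "s > 0" by (simp_all add: s_def)
  define v where "v = a + c + s *\<^sub>R b"
  have vx: "mink v x = 0"
    using perp by (simp add: v_def mink_simps)
  have vv: "mink v v = 4 + 2 * mink a c + 2 * s * (mink a b + mink c b)"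
    using unit s mink_sym[of c a] mink_sym[of b a] mink_sym[of b c]
    by (simp add: v_def mink_simps algebra_simps)
  have "2 * s * (mink a b + mink c b) \<le> 2 * s * (- s)"
    using ab cb s by (intro mult_left_mono) (auto simp: s_def)
  then have bound: "2 * s * (mink a b + mink c b) \<le> - 4"
    using s by simp
  have "mink v v = 0"
    using mink_perp_timelike_nonneg[OF x vx] vv ac bound by linarith
  then have "v = 0" by (rule mink_perp_timelike_eq_0[OF x vx])
  have "2 * s * (mink a b + mink c b) = 2 * s * (- s)"
    using \<open>mink v v = 0\<close> vv ac bound s by simp
  then have "mink a b + mink c b = - s"
    using s(2) by (subst (asm) mult_cancel_left) simp
  then have "mink a b = - s / 2"
    using ab cb by (simp add: s_def)
  then have "hrefl b a = a + s *\<^sub>R b" by (simp add: hrefl_def)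
  also have "\<dots> = - c"
    using \<open>v = 0\<close> by (simp add: v_def eq_neg_iff_add_eq_0 algebra_simps)
  finally show ?thesis .
qed

lemma cos_pi_div_even:
  assumes "k \<ge> 1"
  shows "cos (pi / (2 * real k)) = 0 \<or> sqrt 2 / 2 \<le> cos (pi / (2 * real k))"
proof (cases "k = 1")
  case False
  then have "pi / (2 * real k) \<le> pi / 4"
    using assms by (intro divide_left_mono) auto
  then have "cos (pi / 4) \<le> cos (pi / (2 * real k))"
    by (intro cos_monotone_0_pi_le) auto
  then show ?thesis by (simp add: cos_45)
qed simp

section \<open>Facet normals\<close>

definition lies_in_hyperplane :: "(real^5) set \<Rightarrow> bool" where
  "lies_in_hyperplane S \<longleftrightarrow> (\<exists>v. mink v v = 1 \<and> (\<forall>y\<in>S. mink y v = 0))"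

lemma lies_in_hyperplane_subset:
  "S \<subseteq> T \<Longrightarrow> lies_in_hyperplane T \<Longrightarrow> lies_in_hyperplane S"
  unfolding lies_in_hyperplane_def by blast

lemma lies_in_hyperplane_isometry_image:
  assumes g: "mink_isometry g" and "lies_in_hyperplane (g ` S)"
  shows "lies_in_hyperplane S"
proof -
  obtain v where v: "mink v v = 1" "\<forall>y\<in>S. mink (g y) v = 0"
    using assms(2) by (auto simp: lies_in_hyperplane_def)
  obtain w where "v = g w"
    using mink_isometry_surj[OF g] by (metis surjD)
  then show ?thesis
    using v g unfolding lies_in_hyperplane_def by (metis mink_isometry_mink)
qed

lemma lies_in_hyperplane_if_opposite_sides:
  assumes "mink v v = 1" "\<forall>y\<in>S. mink y v \<le> 0" "\<forall>y\<in>S. mink y (- v) \<le> 0"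
  shows "lies_in_hyperplane S"
  using assms unfolding lies_in_hyperplane_def
  by (metis antisym mink_minus_right neg_le_0_iff_le)

lemma unit_normal_unique:
  assumes "dim A = 4" and A: "\<forall>y\<in>A. mink y u = 0" "\<forall>y\<in>A. mink y a = 0"
    and unit: "mink u u = 1" "mink a a = 1"
    and C: "\<forall>y\<in>C. mink y u \<le> 0" "\<forall>y\<in>C. mink y a \<le> 0"
    and "\<not> lies_in_hyperplane C"
  shows "a = u"
proof -
  have "u \<noteq> 0" using unit by auto
  then obtain c where c: "a = c *\<^sub>R u"
    using mink_perp_parallel[OF \<open>dim A = 4\<close>] A by blast
  then have "c * c = 1" using unit by (simp add: mink_simps)
  then have "c = 1 \<or> c = -1"
    by (metis minus_mult_minus mult_cancel_left2 square_eq_1_iff)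
  moreover have "c \<noteq> -1"
  proof
    assume "c = -1"
    then have "lies_in_hyperplane C"
      using C c unit by (intro lies_in_hyperplane_if_opposite_sides[of u]) auto
    then show False using assms(8) by blast
  qed
  ultimately show ?thesis using c by simp
qed

lemma not_lies_in_hyperplane_if_orthogonal_facets:
  assumes "A \<subseteq> S" "B \<subseteq> S" "dim A = 4" "dim B = 4"
    and "\<forall>y\<in>A. mink y a = 0" "\<forall>y\<in>B. mink y b = 0"
    and "mink a a = 1" "mink b b = 1" "mink a b = 0"
  shows "\<not> lies_in_hyperplane S"
proof
  assume "lies_in_hyperplane S"
  then obtain v where v: "mink v v = 1" "\<forall>y\<in>S. mink y v = 0"
    by (auto simp: lies_in_hyperplane_def)
  have "a \<noteq> 0" "b \<noteq> 0" using assms(7,8) by auto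
  then obtain c d where c: "v = c *\<^sub>R a" and d: "v = d *\<^sub>R b"
    using mink_perp_parallel[OF assms(3)] mink_perp_parallel[OF assms(4)] assms(1,2,5,6) v
    by (metis (mono_tags, lifting) mem_Collect_eq subset_eq)
  have "c = mink a v" using c assms(7) by (simp add: mink_simps)
  also have "\<dots> = 0" using d assms(9) by (simp add: mink_simps)
  finally show False
    using v c by simp
qed

lemma Hyp_mink_self: "x \<in> Hyp \<Longrightarrow> mink x x = -1"
  by (simp add: Hyp_def)

lemma supports_perp: "supports Q G a \<Longrightarrow> x \<in> G \<Longrightarrow> mink x a = 0"
  unfolding supports_def hplane_def by blast

lemma normal_eqI:
  assumes "\<not> lies_in_hyperplane Q" "supports Q G a" "dim G = 4"
  shows "normal Q G = a"
  unfolding normal_def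
proof (rule the_equality)
  fix a'
  assume "supports Q G a'"
  with assms show "a' = a"
    by (intro unit_normal_unique[of G a a' Q])
       (auto simp: supports_def hplane_def halfspace_def)
qed (use assms in simp)

lemma supports_normal:
  "\<not> lies_in_hyperplane Q \<Longrightarrow> is_facet Q G \<Longrightarrow> supports Q G (normal Q G)"
  unfolding is_facet_def using normal_eqI by metis

section \<open>Reflection sequences\<close>

locale reflection_sequence =
  fixes e :: "nat \<Rightarrow> real^5" and P F :: "nat \<Rightarrow> (real^5) set"
  assumes unit_normals: "\<And>i. i \<in> {1..7} \<Longrightarrow> mink (e i) (e i) = 1"
    and obtuse_normals: "\<And>i j. i \<in> {1..7} \<Longrightarrow> j \<in> {1..7} \<Longrightarrow> i \<noteq> j \<Longrightarrow> mink (e i) (e j) \<le> 0"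
    and facets_P0: "\<And>i. i \<in> {1..7} \<Longrightarrow> is_facet (polytope_of e) (cfacet e i)"
    and P0_not_in_hyperplane: "\<not> lies_in_hyperplane (polytope_of e)"
    and P_0: "P 0 = polytope_of e"
    and admissible_F: "\<And>n. admissible (P n) (F n)"
    and P_Suc: "\<And>n. P (Suc n) = P n \<union> hrefl (normal (P n) (F n)) ` P n"
begin

definition mirror :: "nat \<Rightarrow> real^5" where
  "mirror n = normal (P n) (F n)"

lemma P_Suc_mirror: "P (Suc n) = P n \<union> hrefl (mirror n) ` P n"
  by (simp add: P_Suc mirror_def)

lemma tiles_SucE:
  assumes "g \<in> tiles P F (Suc n)"
  obtains (old) "g \<in> tiles P F n"
    | (new) g' where "g' \<in> tiles P F n" "g = hrefl (mirror n) \<circ> g'"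
  using assms by (auto simp: mirror_def)

lemma polytope_of_subset_P: "polytope_of e \<subseteq> P n"
  by (induction n) (auto simp: P_0 P_Suc)

lemma facet_F: "is_facet (P n) (F n)"
  using admissible_F unfolding admissible_def by blast

lemma P_subset_Hyp: "P n \<subseteq> Hyp"
  using facet_F unfolding is_facet_def by blast

lemma P_not_in_hyperplane: "\<not> lies_in_hyperplane (P n)"
  using lies_in_hyperplane_subset[OF polytope_of_subset_P] P0_not_in_hyperplane by blast

lemma supports_mirror: "supports (P n) (F n) (mirror n)"
  unfolding mirror_def using supports_normal[OF P_not_in_hyperplane facet_F] .

lemma mirror_unit: "mink (mirror n) (mirror n) = 1"
  using supports_mirror by (simp add: supports_def)

lemma mirror_side: "y \<in> P n \<Longrightarrow> mink y (mirror n) \<le> 0"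
  using supports_mirror by (auto simp: supports_def halfspace_def)

lemma F_eq_P_inter_hplane: "F n = P n \<inter> hplane (mirror n)"
  using supports_mirror by (simp add: supports_def)

lemma F_subset_P: "F n \<subseteq> P n"
  using F_eq_P_inter_hplane by blast

lemma side_P_Suc:
  assumes "\<forall>y\<in>P (Suc n). mink y v \<le> 0"
  shows side_P_Suc_P: "\<forall>y\<in>P n. mink y v \<le> 0"
    and side_P_Suc_hrefl: "\<forall>y\<in>P n. mink y (hrefl (mirror n) v) \<le> 0"
proof -
  show "\<forall>y\<in>P n. mink y v \<le> 0"
    using assms by (simp add: P_Suc_mirror)
  show "\<forall>y\<in>P n. mink y (hrefl (mirror n) v) \<le> 0"
  proof
    fix y
    assume "y \<in> P n"
    then have "mink (hrefl (mirror n) y) v \<le> 0"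
      using assms by (simp add: P_Suc_mirror)
    then show "mink y (hrefl (mirror n) v) \<le> 0"
      using hrefl_mink[of "mirror n" y "hrefl (mirror n) v"] mirror_unit by simp
  qed
qed

lemma tile_isometry: "g \<in> tiles P F n \<Longrightarrow> mink_isometry g"
proof (induction n arbitrary: g)
  case (Suc n)
  from Suc.prems show ?case
    by (cases rule: tiles_SucE) (metis Suc.IH mink_isometry_comp mink_isometry_hrefl mirror_unit)+
qed (simp add: mink_isometry_id)

lemma tile_image_subset: "g \<in> tiles P F n \<Longrightarrow> g ` polytope_of e \<subseteq> P n"
proof (induction n arbitrary: g)
  case (Suc n)
  from Suc.prems show ?case
    by (cases rule: tiles_SucE) (use Suc.IH in \<open>auto simp: P_Suc_mirror image_comp[symmetric]\<close>)
qed (simp add: P_0)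

lemma tile_facet_point:
  assumes "g \<in> tiles P F n" "x \<in> g ` cfacet e i"
  shows "x \<in> P n" and "mink x (g (e i)) = 0"
  using assms tile_image_subset tile_isometry[OF assms(1)]
  by (auto simp: cfacet_def hplane_def mink_isometry_mink)

lemma normal_eq_tile_normal:
  assumes G: "is_facet (P n) G" and g: "g \<in> tiles P F n" and i: "i \<in> {1..7}"
    and "g ` cfacet e i \<subseteq> G"
  shows "normal (P n) G = g (e i)"
proof (rule unit_normal_unique[of "g ` cfacet e i" _ _ "g ` polytope_of e"])
  have iso: "mink_isometry g" using tile_isometry[OF g] .
  have sG: "supports (P n) G (normal (P n) G)"
    using supports_normal[OF P_not_in_hyperplane G] .
  show "dim (g ` cfacet e i) = 4"
    using facets_P0[OF i] dim_mink_isometry_image[OF iso] by (simp add: is_facet_def)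
  show "\<forall>y\<in>g ` cfacet e i. mink y (g (e i)) = 0"
    using tile_facet_point(2)[OF g] by blast
  show "\<forall>y\<in>g ` cfacet e i. mink y (normal (P n) G) = 0"
    using sG \<open>g ` cfacet e i \<subseteq> G\<close> by (auto simp: supports_def hplane_def)
  show "mink (g (e i)) (g (e i)) = 1"
    using unit_normals[OF i] mink_isometry_mink[OF iso] by simp
  show "mink (normal (P n) G) (normal (P n) G) = 1"
    using sG by (simp add: supports_def)
  show "\<forall>y\<in>g ` polytope_of e. mink y (g (e i)) \<le> 0"
    using i by (auto simp: mink_isometry_mink[OF iso] polytope_of_def)
  show "\<forall>y\<in>g ` polytope_of e. mink y (normal (P n) G) \<le> 0"
    using sG tile_image_subset[OF g] by (auto simp: supports_def halfspace_def)
  show "\<not> lies_in_hyperplane (g ` polytope_of e)"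
    using P0_not_in_hyperplane lies_in_hyperplane_isometry_image[OF iso] by blast
qed

lemma tile_wall_facet:
  assumes g: "g \<in> tiles P F n" and i: "i \<in> {1..7}"
    and side: "\<forall>y\<in>P n. mink y (g (e i)) \<le> 0"
  shows "is_facet (P n) (P n \<inter> hplane (g (e i)))"
    and "normal (P n) (P n \<inter> hplane (g (e i))) = g (e i)"
proof -
  let ?W = "P n \<inter> hplane (g (e i))"
  have unit: "mink (g (e i)) (g (e i)) = 1"
    using unit_normals[OF i] mink_isometry_mink[OF tile_isometry[OF g]] by simp
  have sub: "g ` cfacet e i \<subseteq> ?W"
  proof
    fix x
    assume "x \<in> g ` cfacet e i"
    then show "x \<in> ?W"
      using tile_facet_point[OF g, of x i] P_subset_Hyp[of n] unfolding hplane_def by blast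
  qed
  have "4 \<le> dim ?W"
    using dim_subset[OF sub] facets_P0[OF i] dim_mink_isometry_image[OF tile_isometry[OF g]]
    by (simp add: is_facet_def)
  moreover have "dim ?W \<le> 4"
    using dim_subset[of ?W "{y. mink y (g (e i)) = 0}"] dim_mink_perp[of "g (e i)"] unit
    by (force simp: hplane_def)
  moreover have "supports (P n) ?W (g (e i))"
    using unit side P_subset_Hyp by (auto simp: supports_def halfspace_def)
  ultimately show "is_facet (P n) ?W" "normal (P n) ?W = g (e i)"
    using P_subset_Hyp normal_eqI[OF P_not_in_hyperplane]
    by (auto simp: is_facet_def)
qed

lemma normal_perp:
  assumes "is_facet (P n) G" "x \<in> G"
  shows "mink (normal (P n) G) x = 0"
  using supports_perp[OF supports_normal[OF P_not_in_hyperplane assms(1)] assms(2)]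
  by (simp add: mink_sym)

lemma mirror_perp: "x \<in> F n \<Longrightarrow> mink (mirror n) x = 0"
  unfolding mirror_def using normal_perp[OF facet_F] .

lemma mirror_angle:
  assumes G: "is_facet (P n) G" and "G \<noteq> F n" and x: "x \<in> G \<inter> F n"
  shows "mink (normal (P n) G) (mirror n) = 0 \<or> mink (normal (P n) G) (mirror n) \<le> - sqrt 2 / 2"
proof -
  let ?a = "normal (P n) G"
  obtain k :: nat where "k \<ge> 1" and k: "dihedral (P n) (F n) G = pi / (2 * real k)"
    using admissible_F[of n] G \<open>G \<noteq> F n\<close> x unfolding admissible_def by blast
  have sG: "supports (P n) G ?a"
    using supports_normal[OF P_not_in_hyperplane G] .
  have "mink x x = -1"
    using x F_subset_P P_subset_Hyp Hyp_mink_self by blast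
  moreover have "mink ?a x = 0" "mink (mirror n) x = 0"
    using x normal_perp[OF G] mirror_perp by auto
  ultimately have "\<bar>mink (mirror n) ?a\<bar> \<le> 1"
    using mink_unit_perp_timelike_bound mirror_unit sG by (simp add: supports_def)
  then have "cos (arccos (- mink (mirror n) ?a)) = - mink (mirror n) ?a"
    by (intro cos_arccos) auto
  then have "- mink ?a (mirror n) = cos (pi / (2 * real k))"
    using k by (simp add: dihedral_def mirror_def[symmetric] mink_sym[of ?a])
  then show ?thesis
    using cos_pi_div_even[OF \<open>k \<ge> 1\<close>] by auto
qed

lemma facet_ne_F:
  assumes G: "is_facet (P n) G"
    and side: "\<forall>y\<in>P n. mink y (hrefl (mirror n) (normal (P n) G)) \<le> 0"
  shows "G \<noteq> F n"
proof
  assume "G = F n"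
  then have "\<forall>y\<in>P n. mink y (- mirror n) \<le> 0"
    using side by (simp add: mirror_def[symmetric] hrefl_self mirror_unit)
  then have "lies_in_hyperplane (P n)"
    using mirror_unit mirror_side by (intro lies_in_hyperplane_if_opposite_sides) auto
  then show False using P_not_in_hyperplane by blast
qed

text \<open>By admissibility, \<open>G\<close> and \<open>K\<close> meet the mirror at angle \<open>\<pi>/2\<close> or at most \<open>\<pi>/4\<close>.
  If both angles were at most \<open>\<pi>/4\<close>, the reflected normal of \<open>G\<close> would be the opposite of
  the normal of \<open>K\<close>, trapping \<open>P n\<close> in a hyperplane.\<close>
lemma mink_hrefl_mirror_normal:
  assumes G: "is_facet (P n) G" and K: "is_facet (P n) K" and x: "x \<in> G \<inter> K \<inter> F n"
    and obtuse: "mink (normal (P n) G) (normal (P n) K) \<le> 0"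
    and G_side: "\<forall>y\<in>P n. mink y (hrefl (mirror n) (normal (P n) G)) \<le> 0"
    and K_side: "\<forall>y\<in>P n. mink y (hrefl (mirror n) (normal (P n) K)) \<le> 0"
  shows "mink (normal (P n) G) (hrefl (mirror n) (normal (P n) K))
       = mink (normal (P n) G) (normal (P n) K)"
proof -
  let ?a = "normal (P n) G" and ?c = "normal (P n) K" and ?b = "mirror n"
  have sG: "supports (P n) G ?a" and sK: "supports (P n) K ?c"
    using supports_normal[OF P_not_in_hyperplane] G K by blast+
  have angle_a: "mink ?a ?b = 0 \<or> mink ?a ?b \<le> - sqrt 2 / 2"
    using mirror_angle[OF G facet_ne_F[OF G G_side]] x by blast
  have angle_c: "mink ?c ?b = 0 \<or> mink ?c ?b \<le> - sqrt 2 / 2"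
    using mirror_angle[OF K facet_ne_F[OF K K_side]] x by blast
  have "mink ?a ?b = 0 \<or> mink ?c ?b = 0"
  proof (rule ccontr)
    assume "\<not> ?thesis"
    then have sharp: "mink ?a ?b \<le> - sqrt 2 / 2" "mink ?c ?b \<le> - sqrt 2 / 2"
      using angle_a angle_c by auto
    have "mink x x = -1"
      using x F_subset_P P_subset_Hyp Hyp_mink_self by blast
    moreover have "mink ?a x = 0" "mink ?b x = 0" "mink ?c x = 0"
      using x normal_perp[OF G] normal_perp[OF K] mirror_perp by auto
    ultimately have "hrefl ?b ?a = - ?c"
      using sG sK mirror_unit obtuse sharp
      by (intro hrefl_eq_neg_if_sharp_angles[of x]) (auto simp: supports_def)
    then have "lies_in_hyperplane (P n)"
      using G_side sK
      by (intro lies_in_hyperplane_if_opposite_sides[of ?c])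
         (auto simp: supports_def halfspace_def)
    then show False using P_not_in_hyperplane by blast
  qed
  then show ?thesis
    by (auto simp: mink_hrefl_right[OF mirror_unit])
qed

lemma tile_walls_gram_across_mirror:
  assumes g: "g \<in> tiles P F n" and h: "h \<in> tiles P F n"
    and i: "i \<in> {1..7}" and j: "j \<in> {1..7}" and "i \<noteq> j"
    and xg: "x \<in> g ` cfacet e i" and xh: "x \<in> (hrefl (mirror n) \<circ> h) ` cfacet e j"
    and g_side: "\<forall>y\<in>P (Suc n). mink y (g (e i)) \<le> 0"
    and h_side: "\<forall>y\<in>P (Suc n). mink y (hrefl (mirror n) (h (e j))) \<le> 0"
    and IH: "\<And>x. x \<in> g ` cfacet e i \<Longrightarrow> x \<in> h ` cfacet e j \<Longrightarrow>
      \<forall>y\<in>P n. mink y (g (e i)) \<le> 0 \<Longrightarrow> \<forall>y\<in>P n. mink y (h (e j)) \<le> 0 \<Longrightarrow>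
      mink (g (e i)) (h (e j)) = mink (e i) (e j) \<and> cfacet e i \<inter> cfacet e j \<noteq> {}"
  shows "mink (g (e i)) (hrefl (mirror n) (h (e j))) = mink (e i) (e j)
      \<and> cfacet e i \<inter> cfacet e j \<noteq> {}"
proof -
  let ?r = "hrefl (mirror n)" and ?a = "g (e i)" and ?c = "h (e j)"
  obtain z where z: "z \<in> cfacet e j" "x = ?r (h z)"
    using xh by auto
  have hz: "h z \<in> P n"
    using tile_facet_point(1)[OF h] z(1) by blast
  have "mink x (mirror n) \<le> 0"
    using mirror_side tile_facet_point(1)[OF g xg] by blast
  moreover have "mink x (mirror n) \<ge> 0"
    using mirror_side[OF hz] z(2) by (simp add: mink_hrefl_self[OF mirror_unit])
  ultimately have "mink x (mirror n) = 0" by simp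
  then have "x = h z"
    using z(2) hrefl_fixes[of x "mirror n"] mirror_unit by (metis hrefl_hrefl)
  then have xh': "x \<in> h ` cfacet e j" using z(1) by blast
  have a_side: "\<forall>y\<in>P n. mink y ?a \<le> 0" "\<forall>y\<in>P n. mink y (?r ?a) \<le> 0"
    using side_P_Suc[OF g_side] by blast+
  have c_side: "\<forall>y\<in>P n. mink y ?c \<le> 0" "\<forall>y\<in>P n. mink y (?r ?c) \<le> 0"
    using side_P_Suc[OF h_side] mirror_unit by auto
  have gram: "mink ?a ?c = mink (e i) (e j)" and meet: "cfacet e i \<inter> cfacet e j \<noteq> {}"
    using IH[OF xg xh' a_side(1) c_side(1)] by blast+
  let ?G = "P n \<inter> hplane ?a" and ?K = "P n \<inter> hplane ?c"
  have "x \<in> ?G \<inter> ?K \<inter> F n"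
    using tile_facet_point[OF g xg] tile_facet_point[OF h xh'] \<open>mink x (mirror n) = 0\<close>
      P_subset_Hyp F_eq_P_inter_hplane by (auto simp: hplane_def)
  then have "mink ?a (?r ?c) = mink ?a ?c"
    using mink_hrefl_mirror_normal[OF tile_wall_facet(1)[OF g i a_side(1)]
        tile_wall_facet(1)[OF h j c_side(1)]]
      tile_wall_facet(2)[OF g i a_side(1)] tile_wall_facet(2)[OF h j c_side(1)]
      gram obtuse_normals[OF i j \<open>i \<noteq> j\<close>] a_side(2) c_side(2)
    by simp
  then show ?thesis using gram meet by simp
qed

lemma tile_walls_gram_reflected:
  assumes xg: "x \<in> (hrefl (mirror n) \<circ> g) ` cfacet e i"
    and xh: "x \<in> (hrefl (mirror n) \<circ> h) ` cfacet e j"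
    and g_side: "\<forall>y\<in>P (Suc n). mink y (hrefl (mirror n) (g (e i))) \<le> 0"
    and h_side: "\<forall>y\<in>P (Suc n). mink y (hrefl (mirror n) (h (e j))) \<le> 0"
    and IH: "\<And>x. x \<in> g ` cfacet e i \<Longrightarrow> x \<in> h ` cfacet e j \<Longrightarrow>
      \<forall>y\<in>P n. mink y (g (e i)) \<le> 0 \<Longrightarrow> \<forall>y\<in>P n. mink y (h (e j)) \<le> 0 \<Longrightarrow>
      mink (g (e i)) (h (e j)) = mink (e i) (e j) \<and> cfacet e i \<inter> cfacet e j \<noteq> {}"
  shows "mink (hrefl (mirror n) (g (e i))) (hrefl (mirror n) (h (e j))) = mink (e i) (e j)
      \<and> cfacet e i \<inter> cfacet e j \<noteq> {}"
proof -
  let ?r = "hrefl (mirror n)"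
  have "?r x \<in> g ` cfacet e i"
    using xg mirror_unit by (auto simp: image_iff)
  moreover have "?r x \<in> h ` cfacet e j"
    using xh mirror_unit by (auto simp: image_iff)
  moreover have "\<forall>y\<in>P n. mink y (g (e i)) \<le> 0" "\<forall>y\<in>P n. mink y (h (e j)) \<le> 0"
    using side_P_Suc_hrefl[OF g_side] side_P_Suc_hrefl[OF h_side] mirror_unit by auto
  ultimately show ?thesis
    using IH hrefl_mink[OF mirror_unit] by simp
qed

lemma tile_walls_gram:
  assumes "g \<in> tiles P F n" "h \<in> tiles P F n" "i \<in> {1..7}" "j \<in> {1..7}" "i \<noteq> j"
    and "x \<in> g ` cfacet e i" "x \<in> h ` cfacet e j"
    and "\<forall>y\<in>P n. mink y (g (e i)) \<le> 0" "\<forall>y\<in>P n. mink y (h (e j)) \<le> 0"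
  shows "mink (g (e i)) (h (e j)) = mink (e i) (e j) \<and> cfacet e i \<inter> cfacet e j \<noteq> {}"
  using assms
proof (induction n arbitrary: g h i j x)
  case 0
  then show ?case by auto
next
  case (Suc n)
  let ?r = "hrefl (mirror n)"
  have i: "i \<in> {1..7}" and j: "j \<in> {1..7}" and "i \<noteq> j"
    and xg: "x \<in> g ` cfacet e i" and xh: "x \<in> h ` cfacet e j"
    and g_side: "\<forall>y\<in>P (Suc n). mink y (g (e i)) \<le> 0"
    and h_side: "\<forall>y\<in>P (Suc n). mink y (h (e j)) \<le> 0"
    using Suc.prems by auto
  from Suc.prems(1) show ?case
  proof (cases rule: tiles_SucE)
    case old
    from Suc.prems(2) show ?thesis
    proof (cases rule: tiles_SucE)
      case old
      then show ?thesis
        using Suc.IH \<open>g \<in> tiles P F n\<close> i j \<open>i \<noteq> j\<close> xg xh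
          side_P_Suc_P[OF g_side] side_P_Suc_P[OF h_side] by blast
    next
      case (new h')
      then show ?thesis
        using tile_walls_gram_across_mirror[OF \<open>g \<in> tiles P F n\<close> \<open>h' \<in> tiles P F n\<close> i j \<open>i \<noteq> j\<close>]
          Suc.IH[OF \<open>g \<in> tiles P F n\<close> \<open>h' \<in> tiles P F n\<close> i j \<open>i \<noteq> j\<close>] xg xh g_side h_side
        by simp
    qed
  next
    case (new g')
    from Suc.prems(2) show ?thesis
    proof (cases rule: tiles_SucE)
      case old
      then show ?thesis
        using tile_walls_gram_across_mirror[OF \<open>h \<in> tiles P F n\<close> \<open>g' \<in> tiles P F n\<close> j i \<open>i \<noteq> j\<close>[symmetric]]
          Suc.IH[OF \<open>h \<in> tiles P F n\<close> \<open>g' \<in> tiles P F n\<close> j i \<open>i \<noteq> j\<close>[symmetric]]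
          xg xh g_side h_side \<open>g = ?r \<circ> g'\<close>
        by (simp add: mink_sym Int_commute)
    next
      case (new h')
      then show ?thesis
        using tile_walls_gram_reflected[of x n g' i h' j, OF _ _ _ _ Suc.IH[OF \<open>g' \<in> tiles P F n\<close> \<open>h' \<in> tiles P F n\<close> i j \<open>i \<noteq> j\<close>]]
          xg xh g_side h_side \<open>g = ?r \<circ> g'\<close>
        by simp
    qed
  qed
qed

lemma of_type_tile:
  assumes "of_type e P F n G i" "x \<in> G"
  obtains g where "g \<in> tiles P F n" "g ` cfacet e i \<subseteq> G" "x \<in> g ` cfacet e i"
  using assms unfolding of_type_def by blast

lemma normal_cfacet: "i \<in> {1..7} \<Longrightarrow> normal (polytope_of e) (cfacet e i) = e i"
  using P0_not_in_hyperplane facets_P0 unit_normals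
  by (intro normal_eqI) (auto simp: is_facet_def supports_def halfspace_def polytope_of_def cfacet_def)

lemma dihedral_of_types:
  assumes i: "i \<in> {1..7}" and j: "j \<in> {1..7}" and "i \<noteq> j"
    and G: "is_facet (P n) G" and K: "is_facet (P n) K"
    and "of_type e P F n G i" "of_type e P F n K j" and "x \<in> G \<inter> K"
  shows "dihedral (P n) G K = dihedral (polytope_of e) (cfacet e i) (cfacet e j)"
    and "cfacet e i \<inter> cfacet e j \<noteq> {}"
proof -
  obtain g where g: "g \<in> tiles P F n" "g ` cfacet e i \<subseteq> G" "x \<in> g ` cfacet e i"
    using of_type_tile assms by blast
  obtain h where h: "h \<in> tiles P F n" "h ` cfacet e j \<subseteq> K" "x \<in> h ` cfacet e j"
    using of_type_tile assms by blast
  have "normal (P n) G = g (e i)" "normal (P n) K = h (e j)"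
    using normal_eq_tile_normal G K g h i j by blast+
  moreover have "\<forall>y\<in>P n. mink y (normal (P n) G) \<le> 0" "\<forall>y\<in>P n. mink y (normal (P n) K) \<le> 0"
    using supports_normal[OF P_not_in_hyperplane] G K by (auto simp: supports_def halfspace_def)
  ultimately have "mink (normal (P n) G) (normal (P n) K) = mink (e i) (e j)"
    and "cfacet e i \<inter> cfacet e j \<noteq> {}"
    using tile_walls_gram[OF g(1) h(1) i j \<open>i \<noteq> j\<close> g(3) h(3)] by auto
  then show "dihedral (P n) G K = dihedral (polytope_of e) (cfacet e i) (cfacet e j)"
    and "cfacet e i \<inter> cfacet e j \<noteq> {}"
    by (simp_all add: dihedral_def normal_cfacet[OF i] normal_cfacet[OF j])
qed

end

lemma cox_gram_nonpos: "i \<noteq> j \<Longrightarrow> cox_gram i j \<le> 0"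
  using cos_ge_zero[of "pi / 4"] cos_ge_zero[of "pi / 6"] by (simp add: cox_gram_def)

lemma cox_gram_1_3: "cox_gram 1 3 = 0"
  by (simp add: cox_gram_def doubleton_eq_iff)

theorem proposition3p12:
  fixes e :: "nat \<Rightarrow> real^5"
    and P :: "nat \<Rightarrow> (real^5) set"
    and F :: "nat \<Rightarrow> (real^5) set"
  assumes gram: "\<forall>i\<in>{1..7}. \<forall>j\<in>{1..7}. mink (e i) (e j) = cox_gram i j"
    and facets0: "\<forall>i\<in>{1..7}. is_facet (polytope_of e) (cfacet e i)"
    and P0: "P 0 = polytope_of e"
    and step: "\<forall>n. is_facet (P n) (F n) \<and> \<not> compact (F n) \<and> admissible (P n) (F n)
                    \<and> P (Suc n) = P n \<union> hrefl (normal (P n) (F n)) ` P n"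
  shows "\<forall>n i j G K. i \<in> {1..7} \<and> j \<in> {1..7} \<and> i \<noteq> j
           \<and> is_facet (P n) G \<and> is_facet (P n) K
           \<and> of_type e P F n G i \<and> of_type e P F n K j \<and> G \<inter> K \<noteq> {}
           \<longrightarrow> dihedral (P n) G K = dihedral (polytope_of e) (cfacet e i) (cfacet e j)
               \<and> cfacet e i \<inter> cfacet e j \<noteq> {}"
proof -
  have unit: "mink (e i) (e i) = 1" if "i \<in> {1..7}" for i
    using gram that by (simp add: cox_gram_def)
  have facet_perp: "\<forall>y\<in>cfacet e i. mink y (e i) = 0" for i
    by (simp add: cfacet_def hplane_def)
  have "mink (e 1) (e 3) = 0"
    using gram cox_gram_1_3 by simp
  then have "\<not> lies_in_hyperplane (polytope_of e)"
    using facets0 unit facet_perp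
    by (intro not_lies_in_hyperplane_if_orthogonal_facets[of "cfacet e 1" _ "cfacet e 3"])
       (auto simp: is_facet_def cfacet_def)
  moreover have "mink (e i) (e j) \<le> 0" if "i \<in> {1..7}" "j \<in> {1..7}" "i \<noteq> j" for i j
    using gram that cox_gram_nonpos by simp
  ultimately interpret reflection_sequence e P F
    using unit facets0 P0 step by unfold_locales simp_all
  show ?thesis
    using dihedral_of_types by blast
qed

end
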